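(* Let $T$ be a tree of order $n$ with $\mathrm{diss}(T)=\frac{2n}{3}$. Then for every vertex $u$ of $T$, there is a maximum dissociation set of $T$ (i.e., a dissociation set of cardinality $\mathrm{diss}(T)$) not containing $u$.
   Context: A set $D$ of vertices of a graph $G$ is a dissociation set if the induced subgraph $G[D]$ has maximum degree at most $1$; $\mathrm{diss}(G)$ is the maximum cardinality of a dissociation set of $G$. *)

theory Defs
  imports Main
begin

definition simple_graph :: "'a set \<Rightarrow> 'a set set \<Rightarrow> bool" where
  "simple_graph V E \<longleftrightarrow> finite V \<and> (\<forall>e\<in>E. e \<subseteq> V \<and> card e = 2)"

fun is_walk :: "'a set set \<Rightarrow> 'a list \<Rightarrow> bool" where
  "is_walk E [] = False"
| "is_walk E [x] = True"
| "is_walk E (x # y # xs) = ({x, y} \<in> E \<and> is_walk E (y # xs))"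

definition connected_graph :: "'a set \<Rightarrow> 'a set set \<Rightarrow> bool" where
  "connected_graph V E \<longleftrightarrow> V \<noteq> {} \<and>
     (\<forall>u\<in>V. \<forall>v\<in>V. \<exists>p. is_walk E p \<and> set p \<subseteq> V \<and> hd p = u \<and> last p = v)"

definition has_cycle :: "'a set set \<Rightarrow> bool" where
  "has_cycle E \<longleftrightarrow> (\<exists>p. is_walk E p \<and> length p \<ge> 3 \<and> distinct p \<and> {last p, hd p} \<in> E)"

definition is_tree :: "'a set \<Rightarrow> 'a set set \<Rightarrow> bool" where
  "is_tree V E \<longleftrightarrow> simple_graph V E \<and> connected_graph V E \<and> \<not> has_cycle E"

definition dissociation_set :: "'a set \<Rightarrow> 'a set set \<Rightarrow> 'a set \<Rightarrow> bool" where
  "dissociation_set V E D \<longleftrightarrow> D \<subseteq> V \<and>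
     (\<forall>v\<in>D. card {w\<in>D. {v, w} \<in> E} \<le> 1)"

definition diss :: "'a set \<Rightarrow> 'a set set \<Rightarrow> nat" where
  "diss V E = Max (card ` {D. dissociation_set V E D})"

end

theory Submission imports Defs begin

text \<open>Every forest on \<open>n\<close> vertices has a dissociation set of size at least \<open>2n/3\<close>: take a
longest path \<open>x\<^sub>0 x\<^sub>1 x\<^sub>2 \<dots>\<close>. Then \<open>x\<^sub>0\<close> is a leaf, and all neighbours of \<open>x\<^sub>1\<close> other than
\<open>x\<^sub>2\<close> are leaves. If \<open>x\<^sub>1\<close> has at least two leaf neighbours, put them into the set and delete
them together with \<open>x\<^sub>1\<close>; otherwise put \<open>x\<^sub>0, x\<^sub>1\<close> into the set and delete the at most three
vertices \<open>x\<^sub>0, x\<^sub>1, x\<^sub>2\<close>. In both cases at least two thirds of the deleted vertices are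
kept, and induction finishes the bound.
Applied to the forest \<open>T - u\<close> this gives a dissociation set avoiding \<open>u\<close> of size at least
\<open>2(n - 1)/3\<close>; since \<open>diss T = 2n/3\<close> is an integer, that set is already maximum.\<close>

definition neighbours :: "'a set set \<Rightarrow> 'a \<Rightarrow> 'a set" where
  "neighbours E x = {w. {x, w} \<in> E}"

definition induced_edges :: "'a set set \<Rightarrow> 'a set \<Rightarrow> 'a set set" where
  "induced_edges E S = {e \<in> E. e \<subseteq> S}"

definition is_path :: "'a set \<Rightarrow> 'a set set \<Rightarrow> 'a list \<Rightarrow> bool" where
  "is_path V E p \<longleftrightarrow> is_walk E p \<and> distinct p \<and> set p \<subseteq> V"

lemma is_walk_iff_nth:
  "is_walk E p \<longleftrightarrow> p \<noteq> [] \<and> (\<forall>i. Suc i < length p \<longrightarrow> {p ! i, p ! Suc i} \<in> E)"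
proof (induction E p rule: is_walk.induct)
  case (3 E x y xs)
  have "(\<forall>i. Suc i < length (x # y # xs) \<longrightarrow> {(x # y # xs) ! i, (x # y # xs) ! Suc i} \<in> E)
      \<longleftrightarrow> {x, y} \<in> E \<and> (\<forall>i. Suc i < length (y # xs) \<longrightarrow> {(y # xs) ! i, (y # xs) ! Suc i} \<in> E)"
    by (auto simp: nth_Cons split: nat.splits)
  with 3 show ?case by simp
qed auto

lemma is_walk_mono: "is_walk E' p \<Longrightarrow> E' \<subseteq> E \<Longrightarrow> is_walk E p"
  by (induction E' p rule: is_walk.induct) auto

lemma has_cycle_mono: "has_cycle E' \<Longrightarrow> E' \<subseteq> E \<Longrightarrow> has_cycle E"
  unfolding has_cycle_def using is_walk_mono by blast

lemma has_cycle_if_chord: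
  assumes "is_walk E p" "distinct p" "i + 2 \<le> j" "j < length p" "{p ! j, p ! i} \<in> E"
  shows "has_cycle E"
proof -
  define q where "q = drop i (take (Suc j) p)"
  have len: "length q = Suc j - i" using assms by (simp add: q_def)
  have nth: "\<And>k. k < length q \<Longrightarrow> q ! k = p ! (i + k)" using assms by (simp add: q_def)
  have "is_walk E q"
    using assms(1,3,4) len nth unfolding is_walk_iff_nth by auto
  moreover have "distinct q" using assms(2) by (simp add: q_def)
  moreover have "hd q = p ! i" using nth[of 0] len assms by (subst hd_conv_nth) auto
  moreover have "last q = p ! j"
    using nth[of "j - i"] len assms by (subst last_conv_nth) (auto simp: Suc_diff_le)
  ultimately show ?thesis unfolding has_cycle_def using len assms by (intro exI[of _ q]) auto
qed

lemma has_cycle_if_common_neighbour: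
  assumes "is_walk E p" "distinct p" "i < j" "j < length p" "w \<notin> set p"
    "{p ! i, w} \<in> E" "{p ! j, w} \<in> E"
  shows "has_cycle E"
proof -
  define q0 where "q0 = drop i (take (Suc j) p)"
  define q where "q = q0 @ [w]"
  have len0: "length q0 = Suc j - i" using assms by (simp add: q0_def)
  have nth0: "\<And>k. k < length q0 \<Longrightarrow> q0 ! k = p ! (i + k)" using assms by (simp add: q0_def)
  have len: "length q = Suc (Suc j - i)" by (simp add: q_def len0)
  have "{q ! k, q ! Suc k} \<in> E" if k: "Suc k < length q" for k
  proof (cases "Suc k < length q0")
    case True
    then show ?thesis using assms(1,4) nth0 len0 unfolding is_walk_iff_nth q_def
      by (auto simp: nth_append)
  next
    case False
    then have "k = j - i" using k len len0 by auto
    then show ?thesis using nth0[of k] len0 assms unfolding q_def by (auto simp: nth_append)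
  qed
  then have "is_walk E q" unfolding is_walk_iff_nth by (simp add: q_def)
  moreover have "distinct q" using assms(2,5)
    by (fastforce simp: q_def q0_def dest: in_set_dropD in_set_takeD)
  moreover have "hd q = p ! i"
    using nth0[of 0] len0 assms by (simp add: q_def hd_append) (subst hd_conv_nth, auto)
  moreover have "last q = w" by (simp add: q_def)
  ultimately show ?thesis unfolding has_cycle_def using len assms
    by (intro exI[of _ q]) (auto simp: insert_commute)
qed

lemma simple_graph_edge: "simple_graph V E \<Longrightarrow> {x, y} \<in> E \<Longrightarrow> x \<in> V \<and> y \<in> V \<and> x \<noteq> y"
  unfolding simple_graph_def by (cases "x = y") force+

lemma simple_graph_induced_edges:
  "simple_graph V E \<Longrightarrow> S \<subseteq> V \<Longrightarrow> simple_graph S (induced_edges E S)"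
  by (auto simp: simple_graph_def induced_edges_def intro: finite_subset)

lemma acyclic_induced_edges: "\<not> has_cycle E \<Longrightarrow> \<not> has_cycle (induced_edges E S)"
  using has_cycle_mono by (auto simp: induced_edges_def)

lemma exists_longest_path:
  assumes "simple_graph V E" "{a, b} \<in> E"
  obtains p where "is_path V E p" "2 \<le> length p" "\<And>q. is_path V E q \<Longrightarrow> length q \<le> length p"
proof -
  have fV: "finite V" using assms(1) by (simp add: simple_graph_def)
  have "{p. is_path V E p} \<subseteq> {p. set p \<subseteq> V \<and> length p \<le> card V}"
    using fV by (auto simp: is_path_def distinct_card[symmetric] intro: card_mono)
  then have fin: "finite {p. is_path V E p}"
    using finite_lists_length_le[OF fV] finite_subset by blast
  have ab: "is_path V E [a, b]" using assms simple_graph_edge by (fastforce simp: is_path_def)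
  have "Max (length ` {p. is_path V E p}) \<in> length ` {p. is_path V E p}"
    using fin ab by (intro Max_in) auto
  then obtain p where p: "is_path V E p" and "length p = Max (length ` {p. is_path V E p})"
    by auto
  then have max: "\<And>q. is_path V E q \<Longrightarrow> length q \<le> length p" using fin by simp
  from max[OF ab] have "2 \<le> length p" by simp
  with p max show ?thesis using that by blast
qed

context
  fixes V :: "'a set" and E :: "'a set set" and x0 x1 :: 'a and rest :: "'a list"
  assumes simple: "simple_graph V E"
    and acyclic: "\<not> has_cycle E"
    and path: "is_path V E (x0 # x1 # rest)"
    and longest: "\<And>q. is_path V E q \<Longrightarrow> length q \<le> length (x0 # x1 # rest)"
begin

lemma longest_path_start_neighbour:
  assumes "{x0, z} \<in> E"
  shows "z = x1"
proof (rule ccontr)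
  define p where "p = x0 # x1 # rest"
  have pw: "is_walk E p" and pd: "distinct p" and pV: "set p \<subseteq> V"
    using path by (auto simp: is_path_def p_def)
  assume zx1: "z \<noteq> x1"
  have zx0: "z \<noteq> x0" and zV: "z \<in> V" using simple_graph_edge[OF simple assms] by auto
  show False
  proof (cases "z \<in> set p")
    case True
    then obtain j where j: "j < length p" "p ! j = z" by (metis in_set_conv_nth)
    moreover have "j \<noteq> 0" "j \<noteq> 1" using j zx0 zx1 by (auto simp: p_def nth_Cons split: nat.splits)
    ultimately have "0 + 2 \<le> j" by simp
    then have "has_cycle E"
      using has_cycle_if_chord[OF pw pd _ j(1)] j assms by (simp add: p_def insert_commute)
    with acyclic show False by simp
  next
    case False
    then have "is_path V E (z # p)" using zV pw pd pV assms
      by (simp add: is_path_def p_def insert_commute)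
    with longest show False by (fastforce simp: p_def)
  qed
qed

(* For a path with two vertices the hypotheses are contradictory, so the unspecified
   value of the index 2 is harmless. *)
lemma longest_path_second_neighbour:
  assumes "{x1, w} \<in> E" "{w, z} \<in> E" "z \<noteq> x1"
  shows "w = (x0 # x1 # rest) ! 2"
proof -
  define p where "p = x0 # x1 # rest"
  have pw: "is_walk E p" and pd: "distinct p" and pV: "set p \<subseteq> V"
    using path by (auto simp: is_path_def p_def)
  have wx1: "w \<noteq> x1" and wV: "w \<in> V" using simple_graph_edge[OF simple assms(1)] by auto
  have wx0: "w \<noteq> x0" using longest_path_start_neighbour assms(2,3) by blast
  show ?thesis
  proof (cases "w \<in> set p")
    case True
    then obtain j where j: "j < length p" "p ! j = w" by (metis in_set_conv_nth)
    show ?thesis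
    proof (rule ccontr)
      assume "w \<noteq> (x0 # x1 # rest) ! 2"
      moreover have "j \<noteq> 0" "j \<noteq> 1" using j wx0 wx1 by (auto simp: p_def nth_Cons split: nat.splits)
      ultimately have "1 + 2 \<le> j" using j by (cases "j = 2") (auto simp: p_def)
      then have "has_cycle E"
        using has_cycle_if_chord[OF pw pd _ j(1), of 1] j assms(1) by (simp add: p_def insert_commute)
      with acyclic show False by simp
    qed
  next
    case wp: False
    have zw: "z \<noteq> w" and zV: "z \<in> V" using simple_graph_edge[OF simple assms(2)] by auto
    show ?thesis
    proof (cases "z \<in> set p")
      case True
      then obtain j where j: "j < length p" "p ! j = z" by (metis in_set_conv_nth)
      have "has_cycle E"
      proof (cases "j = 0")
        case True
        show ?thesis using has_cycle_if_common_neighbour[OF pw pd, of 0 1 w] j True assms(1,2) wp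
          by (simp add: p_def insert_commute)
      next
        case False
        with j assms(3) have "1 < j" by (cases "j = 1") (auto simp: p_def)
        then show ?thesis using has_cycle_if_common_neighbour[OF pw pd _ j(1) wp] j assms(1,2)
          by (simp add: p_def insert_commute)
      qed
      with acyclic show ?thesis by simp
    next
      case False
      then have "is_path V E (z # w # tl p)" using wp zw pw pd pV assms zV wV
        by (simp add: is_path_def p_def insert_commute)
      with longest show ?thesis by (fastforce simp: p_def)
    qed
  qed
qed

end

definition dissociation_piece :: "'a set \<Rightarrow> 'a set set \<Rightarrow> 'a set \<Rightarrow> 'a set \<Rightarrow> bool" where
  "dissociation_piece V E R A \<longleftrightarrow> A \<subseteq> R \<and> R \<subseteq> V \<and>
     (\<forall>x\<in>A. card (neighbours E x \<inter> A) \<le> 1) \<and> (\<forall>x\<in>A. neighbours E x \<subseteq> R)"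

lemma dissociation_set_extend:
  assumes simple: "simple_graph V E" and piece: "dissociation_piece V E R A"
    and D: "dissociation_set (V - R) (induced_edges E (V - R)) D"
  shows "dissociation_set V E (D \<union> A) \<and> card (D \<union> A) = card D + card A"
proof -
  have AR: "A \<subseteq> R" and RV: "R \<subseteq> V"
    and inner: "\<forall>x\<in>A. card (neighbours E x \<inter> A) \<le> 1"
    and closed: "\<forall>x\<in>A. neighbours E x \<subseteq> R"
    using piece by (auto simp: dissociation_piece_def)
  have fV: "finite V" using simple by (simp add: simple_graph_def)
  have DVR: "D \<subseteq> V - R" using D by (simp add: dissociation_set_def)
  have "card {w \<in> D \<union> A. {v, w} \<in> E} \<le> 1" if v: "v \<in> D \<union> A" for v
  proof (cases "v \<in> D")
    case True
    have "\<And>w. w \<in> A \<Longrightarrow> {v, w} \<notin> E"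
      using closed True DVR by (auto simp: neighbours_def insert_commute)
    then have "{w \<in> D \<union> A. {v, w} \<in> E} = {w \<in> D. {v, w} \<in> induced_edges E (V - R)}"
      using True DVR by (auto simp: induced_edges_def)
    then show ?thesis using D True by (simp add: dissociation_set_def)
  next
    case False
    with v have "v \<in> A" by simp
    then have "{w \<in> D \<union> A. {v, w} \<in> E} = neighbours E v \<inter> A"
      using closed DVR by (auto simp: neighbours_def)
    then show ?thesis using inner \<open>v \<in> A\<close> by simp
  qed
  moreover have "D \<union> A \<subseteq> V" using DVR AR RV by auto
  moreover have "card (D \<union> A) = card D + card A"
    using DVR AR RV fV by (intro card_Un_disjoint) (auto intro: finite_subset)
  ultimately show ?thesis by (simp add: dissociation_set_def)
qed

lemma acyclic_obtain_dissociation_piece: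
  assumes simple: "simple_graph V E" and acyclic: "\<not> has_cycle E" and "E \<noteq> {}"
  obtains R A where "dissociation_piece V E R A" "R \<noteq> {}" "2 * card R \<le> 3 * card A"
proof -
  have fV: "finite V" using simple by (simp add: simple_graph_def)
  obtain a b where "{a, b} \<in> E" using assms(3) simple unfolding simple_graph_def
    by (metis card_2_iff ex_in_conv)
  then obtain p where path: "is_path V E p" and "2 \<le> length p"
    and longest: "\<And>q. is_path V E q \<Longrightarrow> length q \<le> length p"
    using exists_longest_path[OF simple] by blast
  then obtain x0 x1 rest where p: "p = x0 # x1 # rest"
    by (metis Suc_le_length_iff numeral_2_eq_2)
  note start = longest_path_start_neighbour[OF simple acyclic path[unfolded p] longest[unfolded p]]
  note second = longest_path_second_neighbour[OF simple acyclic path[unfolded p] longest[unfolded p]]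
  have e01: "{x0, x1} \<in> E" using path p by (simp add: is_path_def)
  have x01: "x0 \<noteq> x1" and x1V: "x1 \<in> V" using simple_graph_edge[OF simple e01] by auto
  have NV: "neighbours E x1 \<subseteq> V"
    using simple_graph_edge[OF simple] by (auto simp: neighbours_def)
  have no_loop: "x \<notin> neighbours E x" for x
    using simple_graph_edge[OF simple, of x x] by (auto simp: neighbours_def)
  define L where "L = {w \<in> neighbours E x1. neighbours E w \<subseteq> {x1}}"
  have x0L: "x0 \<in> L" using e01 start by (auto simp: L_def neighbours_def insert_commute)
  have x1L: "x1 \<notin> L" using no_loop by (auto simp: L_def)
  have fL: "finite L" using NV fV by (auto simp: L_def intro: finite_subset)
  have N: "neighbours E x1 \<subseteq> L \<union> {p ! 2}"
    using second by (auto simp: L_def neighbours_def p)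
  show ?thesis
  proof (cases "card L \<ge> 2")
    case True
    have "neighbours E x \<inter> L = {}" if "x \<in> L" for x
      using that x1L unfolding L_def by blast
    then have "dissociation_piece V E (insert x1 L) L"
      using x1V NV by (auto simp: dissociation_piece_def L_def)
    moreover have "2 * card (insert x1 L) \<le> 3 * card L" using True x1L fL by simp
    ultimately show ?thesis using that by blast
  next
    case False
    then have "card L \<le> 1" by simp
    with x0L fL have L: "L = {x0}" by (auto simp: card_le_Suc0_iff_eq)
    have piece: "dissociation_piece V E (insert x1 (neighbours E x1)) {x0, x1}"
      using no_loop x1V NV x0L
      by (auto simp: dissociation_piece_def L_def card_le_Suc0_iff_eq)
    have "card (insert x1 (neighbours E x1)) \<le> card {x1, x0, p ! 2}"
      using N L by (intro card_mono) auto
    also have "\<dots> \<le> 3" by (simp add: card_insert_le_m1)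
    finally have "2 * card (insert x1 (neighbours E x1)) \<le> 3 * card {x0, x1}"
      using x01 by simp
    with piece show ?thesis using that by blast
  qed
qed

theorem forest_dissociation_set_two_thirds:
  "simple_graph V E \<Longrightarrow> \<not> has_cycle E \<Longrightarrow> \<exists>D. dissociation_set V E D \<and> 2 * card V \<le> 3 * card D"
proof (induction "card V" arbitrary: V E rule: less_induct)
  case less
  note simple = less.prems(1) and acyclic = less.prems(2)
  show ?case
  proof (cases "E = {}")
    case True
    then have "dissociation_set V E V" by (simp add: dissociation_set_def)
    then show ?thesis by auto
  next
    case False
    then obtain R A where piece: "dissociation_piece V E R A"
      and "R \<noteq> {}" and two_thirds: "2 * card R \<le> 3 * card A"
      using acyclic_obtain_dissociation_piece[OF simple acyclic] by blast
    have fV: "finite V" using simple by (simp add: simple_graph_def)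
    have RV: "R \<subseteq> V" using piece by (simp add: dissociation_piece_def)
    have "card (V - R) < card V" using RV \<open>R \<noteq> {}\<close> fV by (intro psubset_card_mono) auto
    then obtain D where D: "dissociation_set (V - R) (induced_edges E (V - R)) D"
      and bound: "2 * card (V - R) \<le> 3 * card D"
      using less.hyps simple_graph_induced_edges[OF simple] acyclic_induced_edges[OF acyclic]
      by (metis Diff_subset)
    have "card V = card (V - R) + card R"
      using card_Diff_subset[OF finite_subset[OF RV fV] RV] card_mono[OF fV RV] by simp
    then show ?thesis
      using dissociation_set_extend[OF simple piece D] bound two_thirds
      by (intro exI[of _ "D \<union> A"]) auto
  qed
qed

lemma card_le_diss:
  assumes "simple_graph V E" "dissociation_set V E D"
  shows "card D \<le> diss V E"
proof -
  have "{D. dissociation_set V E D} \<subseteq> Pow V" by (auto simp: dissociation_set_def)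
  then have "finite (card ` {D. dissociation_set V E D})"
    using assms(1) by (auto simp: simple_graph_def intro: finite_subset)
  with assms(2) show ?thesis unfolding diss_def by (intro Max_ge) auto
qed

theorem lemma2:
  fixes V :: "'a set" and E :: "'a set set" and n :: nat
  assumes "is_tree V E"
    and "card V = n"
    and "3 * diss V E = 2 * n"
    and "u \<in> V"
  shows "\<exists>D. dissociation_set V E D \<and> card D = diss V E \<and> u \<notin> D"
proof -
  have simple: "simple_graph V E" and acyclic: "\<not> has_cycle E"
    using assms(1) by (auto simp: is_tree_def)
  obtain D where D: "dissociation_set (V - {u}) (induced_edges E (V - {u})) D"
    and bound: "2 * card (V - {u}) \<le> 3 * card D"
    using forest_dissociation_set_two_thirds simple_graph_induced_edges[OF simple]
      acyclic_induced_edges[OF acyclic] by (metis Diff_subset)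
  have DV: "dissociation_set V E D"
    using dissociation_set_extend[OF simple _ D, of "{}"] assms(4)
    by (simp add: dissociation_piece_def)
  have "u \<notin> D" using D by (auto simp: dissociation_set_def)
  moreover have "card (V - {u}) = n - 1" "n \<ge> 1"
    using assms(2,4) simple by (auto simp: simple_graph_def Suc_le_eq card_gt_0_iff)
  with bound assms(3) card_le_diss[OF simple DV] have "card D = diss V E" by linarith
  ultimately show ?thesis using DV by blast
qed

end
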